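(* Let $G$ be a connected planar graph. Then every minimal $2$-contraction $H$ of $G$ either contains a non-damaged vertex of degree at most $4$, or is $3$-connected.
   Context: All graphs are finite, simple and undirected. A graph $H$ on at least $3$ vertices, together with an edge $u_1u_2\in E(H)$, is a $2$-contraction of $G$ with damaged vertices $u_1,u_2$ if $H\setminus u_1u_2$ (the graph $H$ with the edge $u_1u_2$ removed) is a subgraph of $G$, every vertex $v\in V(H)\setminus\{u_1,u_2\}$ satisfies $d_H(v)=d_G(v)$, and there exists a $(u_1,u_2)$-path in $G$ all of whose internal vertices lie in $V(G)\setminus V(H)$. The non-damaged vertices of $H$ are those of $V(H)\setminus\{u_1,u_2\}$. A $2$-contraction $H'$ of $G$ is smaller than a $2$-contraction $H$ with damaged vertices $\{u_1,u_2\}$ if $V(H')\subsetneq V(H)$ and each of $u_1,u_2$ either does not belong to $V(H')$ or is a damaged vertex of $H'$. A $2$-contraction $H$ of $G$ is minimal if $G$ admits no $2$-contraction smaller than $H$. *)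

theory Defs
  imports "HOL-Analysis.Analysis"
begin

definition sgraph :: "'a set \<Rightarrow> 'a set set \<Rightarrow> bool" where
  "sgraph V E \<longleftrightarrow> finite V \<and> (\<forall>e\<in>E. e \<subseteq> V \<and> card e = 2)"

definition degree :: "'a set set \<Rightarrow> 'a \<Rightarrow> nat" where
  "degree E v = card {e\<in>E. v \<in> e}"

definition is_path :: "'a set \<Rightarrow> 'a set set \<Rightarrow> 'a list \<Rightarrow> 'a \<Rightarrow> 'a \<Rightarrow> bool" where
  "is_path V E xs u v \<longleftrightarrow> xs \<noteq> [] \<and> hd xs = u \<and> last xs = v \<and> distinct xs \<and>
     set xs \<subseteq> V \<and> (\<forall>i. Suc i < length xs \<longrightarrow> {xs ! i, xs ! Suc i} \<in> E)"

definition connected_graph :: "'a set \<Rightarrow> 'a set set \<Rightarrow> bool" where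
  "connected_graph V E \<longleftrightarrow> V \<noteq> {} \<and> (\<forall>u\<in>V. \<forall>v\<in>V. \<exists>xs. is_path V E xs u v)"

definition k_connected :: "nat \<Rightarrow> 'a set \<Rightarrow> 'a set set \<Rightarrow> bool" where
  "k_connected k V E \<longleftrightarrow> card V > k \<and>
     (\<forall>S. S \<subseteq> V \<and> card S < k \<longrightarrow> connected_graph (V - S) {e\<in>E. e \<inter> S = {}})"

text \<open>Planarity: an embedding in the plane (the complex plane = R^2): vertices are mapped
injectively to points, each edge {u,v} to an arc joining the images of u and v that meets
the image of V only at its endpoints, and the arcs of two distinct edges only meet in
images of common endpoints.\<close>

definition planar :: "'a set \<Rightarrow> 'a set set \<Rightarrow> bool" where
  "planar V E \<longleftrightarrow> (\<exists>(p :: 'a \<Rightarrow> complex) (\<gamma> :: 'a set \<Rightarrow> real \<Rightarrow> complex).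
     inj_on p V \<and>
     (\<forall>e\<in>E. arc (\<gamma> e) \<and> {pathstart (\<gamma> e), pathfinish (\<gamma> e)} = p ` e \<and>
              path_image (\<gamma> e) \<inter> p ` V = p ` e) \<and>
     (\<forall>e\<in>E. \<forall>e'\<in>E. e \<noteq> e' \<longrightarrow> path_image (\<gamma> e) \<inter> path_image (\<gamma> e') \<subseteq> p ` (e \<inter> e')))"

definition two_contraction ::
  "'a set \<Rightarrow> 'a set set \<Rightarrow> 'a set \<Rightarrow> 'a set set \<Rightarrow> 'a \<Rightarrow> 'a \<Rightarrow> bool" where
  "two_contraction V E VH EH u1 u2 \<longleftrightarrow>
     sgraph VH EH \<and> card VH \<ge> 3 \<and> u1 \<noteq> u2 \<and> {u1, u2} \<in> EH \<and>
     VH \<subseteq> V \<and> EH - {{u1, u2}} \<subseteq> E \<and>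
     (\<forall>v \<in> VH - {u1, u2}. degree EH v = degree E v) \<and>
     (\<exists>xs. is_path V E xs u1 u2 \<and> set (butlast (tl xs)) \<subseteq> V - VH)"

definition smaller_two_contraction ::
  "'a set \<Rightarrow> 'a set set \<Rightarrow> 'a set \<Rightarrow> 'a set set \<Rightarrow> 'a \<Rightarrow> 'a \<Rightarrow>
   'a set \<Rightarrow> 'a set set \<Rightarrow> 'a \<Rightarrow> 'a \<Rightarrow> bool" where
  "smaller_two_contraction V E VH' EH' w1 w2 VH EH u1 u2 \<longleftrightarrow>
     two_contraction V E VH' EH' w1 w2 \<and> VH' \<subset> VH \<and>
     (u1 \<notin> VH' \<or> u1 \<in> {w1, w2}) \<and> (u2 \<notin> VH' \<or> u2 \<in> {w1, w2})"

definition minimal_two_contraction ::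
  "'a set \<Rightarrow> 'a set set \<Rightarrow> 'a set \<Rightarrow> 'a set set \<Rightarrow> 'a \<Rightarrow> 'a \<Rightarrow> bool" where
  "minimal_two_contraction V E VH EH u1 u2 \<longleftrightarrow>
     two_contraction V E VH EH u1 u2 \<and>
     \<not> (\<exists>VH' EH' w1 w2. smaller_two_contraction V E VH' EH' w1 w2 VH EH u1 u2)"

end

theory Submission
  imports Defs
begin

text \<open>Suppose every
non-damaged vertex of \<open>H\<close> has degree at least 3 and some set \<open>S\<close> of at most two vertices
separates \<open>H\<close>. As \<open>u\<^sub>1u\<^sub>2\<close> is an edge, some component \<open>C\<close> of \<open>H - S\<close> contains no damaged
vertex. Keeping \<open>C\<close> and one or two of its boundary vertices, declared damaged and joined by
a new edge, gives a smaller 2-contraction. If the boundary is a single vertex \<open>x\<close>,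
connectivity of \<open>G\<close> yields a neighbour \<open>c \<in> C\<close> of \<open>x\<close>, and \<open>x, c\<close> are the damaged vertices.
If it is a pair \<open>x, y\<close> linked in \<open>H - C\<close>, such a link, with the edge \<open>u\<^sub>1u\<^sub>2\<close> rerouted along
the given path of \<open>G\<close>, is the required \<open>x\<close>-\<open>y\<close> path outside. Otherwise the component of \<open>x\<close>
or of \<open>y\<close> in \<open>H - C\<close> avoids \<open>u\<^sub>1, u\<^sub>2\<close>; merging it into \<open>C\<close> leaves a single boundary vertex.
The degree bound makes the new contraction have at least three vertices.\<close>

definition adj_in :: "'a set \<Rightarrow> 'a set set \<Rightarrow> ('a \<times> 'a) set" where
  "adj_in W E = {(a, b). a \<in> W \<and> b \<in> W \<and> {a, b} \<in> E}"

lemma sym_adj_in: "sym (adj_in W E)"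
  by (auto simp: adj_in_def sym_def insert_commute)

lemma adj_in_rtrancl_sym: "(a, b) \<in> (adj_in W E)\<^sup>* \<Longrightarrow> (b, a) \<in> (adj_in W E)\<^sup>*"
  by (meson sym_adj_in sym_rtrancl symD)

lemma adj_in_reachable_subset: "a \<in> W \<Longrightarrow> {b. (a, b) \<in> (adj_in W E)\<^sup>*} \<subseteq> W"
proof
  fix b assume "a \<in> W" "b \<in> {b. (a, b) \<in> (adj_in W E)\<^sup>*}"
  then have "(a, b) \<in> (adj_in W E)\<^sup>*" by simp
  then show "b \<in> W"
    by (induction rule: rtrancl_induct) (auto simp: \<open>a \<in> W\<close> adj_in_def)
qed

lemma is_path_imp_rtrancl:
  assumes "is_path W E xs u v"
  shows "(u, v) \<in> (adj_in W E)\<^sup>*"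
proof -
  have "(hd xs, xs ! i) \<in> (adj_in W E)\<^sup>*" if "i < length xs" for i
    using that
  proof (induction i)
    case 0
    then show ?case by (simp add: hd_conv_nth)
  next
    case (Suc i)
    then have "(xs ! i, xs ! Suc i) \<in> adj_in W E"
      using assms by (auto simp: is_path_def adj_in_def)
    with Suc show ?case by (meson Suc_lessD rtrancl_into_rtrancl)
  qed
  then show ?thesis
    using assms by (auto simp: is_path_def last_conv_nth)
qed

lemma is_path_take:
  assumes "is_path W E xs u v" "i < length xs"
  shows "is_path W E (take (Suc i) xs) u (xs ! i)"
proof -
  have "last (take (Suc i) xs) = xs ! i"
    using assms(2) by (simp add: take_Suc_conv_app_nth)
  then show ?thesis
    using assms set_take_subset[of "Suc i" xs] by (auto simp: is_path_def)
qed

lemma is_path_snoc: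
  assumes "is_path W E xs u v" "b \<in> W" "b \<notin> set xs" "{v, b} \<in> E"
  shows "is_path W E (xs @ [b]) u b"
proof -
  have "{(xs @ [b]) ! i, (xs @ [b]) ! Suc i} \<in> E" if "Suc i < length (xs @ [b])" for i
  proof (cases "Suc i < length xs")
    case True
    then show ?thesis using assms(1) by (simp add: is_path_def nth_append)
  next
    case False
    with that have "Suc i = length xs" by simp
    moreover have "xs \<noteq> []" "last xs = v"
      using assms(1) by (auto simp: is_path_def)
    ultimately have "xs ! i = v" by (metis diff_Suc_1 last_conv_nth)
    with \<open>Suc i = length xs\<close> show ?thesis
      using assms(4) by (simp add: nth_append)
  qed
  then show ?thesis using assms by (auto simp: is_path_def)
qed

lemma rtrancl_imp_is_path:
  assumes "(u, v) \<in> (adj_in W E)\<^sup>*" "u \<in> W"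
  shows "\<exists>xs. is_path W E xs u v"
  using assms(1)
proof (induction rule: rtrancl_induct)
  case base
  have "is_path W E [u] u u" using assms(2) by (simp add: is_path_def)
  then show ?case by blast
next
  case (step a b)
  then obtain xs where xs: "is_path W E xs u a" by blast
  show ?case
  proof (cases "b \<in> set xs")
    case True
    then obtain i where "i < length xs" "xs ! i = b" by (auto simp: in_set_conv_nth)
    then show ?thesis using is_path_take[OF xs] by metis
  next
    case False
    then show ?thesis using is_path_snoc[OF xs] step(2) by (auto simp: adj_in_def)
  qed
qed

lemma set_butlast_tl: "distinct xs \<Longrightarrow> set (butlast (tl xs)) = set xs - {hd xs, last xs}"
proof (cases xs)
  case (Cons a ys)
  moreover assume "distinct xs"
  ultimately show ?thesis by (cases ys rule: rev_cases) auto
qed simp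

lemma card_le_2_cases:
  assumes "finite S" "card S \<le> 2"
  obtains "S = {}" | x where "S = {x}" | x y where "x \<noteq> y" "S = {x, y}"
proof -
  have "card S = 0 \<or> card S = 1 \<or> card S = 2" using assms(2) by linarith
  with assms(1) that show ?thesis by (auto simp: card_1_singleton_iff card_2_iff)
qed

lemma rtrancl_imp_path_inside:
  assumes "(x, y) \<in> (adj_in W E)\<^sup>*" "x \<in> W" "W \<subseteq> V"
  shows "\<exists>xs. is_path V E xs x y \<and> set (butlast (tl xs)) \<subseteq> W - {x, y}"
proof -
  obtain xs where xs: "is_path W E xs x y" using rtrancl_imp_is_path[OF assms(1,2)] by blast
  then have "is_path V E xs x y" using assms(3) by (auto simp: is_path_def)
  moreover have "set (butlast (tl xs)) \<subseteq> W - {x, y}"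
    using xs set_butlast_tl[of xs] by (auto simp: is_path_def)
  ultimately show ?thesis by blast
qed

locale two_contraction_setting =
  fixes V :: "'a set" and E :: "'a set set" and VH :: "'a set" and EH :: "'a set set"
    and u1 u2 :: 'a
  assumes sgraph_G: "sgraph V E"
    and contraction: "two_contraction V E VH EH u1 u2"
begin

lemma sgraph_H: "sgraph VH EH"
  and card_VH_ge_3: "3 \<le> card VH"
  and u1_neq_u2: "u1 \<noteq> u2"
  and damaged_edge: "{u1, u2} \<in> EH"
  and VH_subset_V: "VH \<subseteq> V"
  and EH_subset_E: "e \<in> EH \<Longrightarrow> e \<noteq> {u1, u2} \<Longrightarrow> e \<in> E"
  and degree_undamaged: "v \<in> VH - {u1, u2} \<Longrightarrow> degree EH v = degree E v"
  and damaged_path: "\<exists>xs. is_path V E xs u1 u2 \<and> set (butlast (tl xs)) \<subseteq> V - VH"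
  using contraction unfolding two_contraction_def by blast+

lemma finite_VH: "finite VH"
  using sgraph_H by (simp add: sgraph_def)

lemma damaged_in_VH: "u1 \<in> VH" "u2 \<in> VH"
  using sgraph_H damaged_edge by (auto simp: sgraph_def)

lemma EH_edge_subset: "e \<in> EH \<Longrightarrow> e \<subseteq> VH"
  using sgraph_H by (simp add: sgraph_def)

lemma EH_edge_at:
  assumes "e \<in> EH" "v \<in> e"
  obtains w where "e = {v, w}" "w \<noteq> v"
proof -
  have "card e = 2" using sgraph_H assms(1) by (simp add: sgraph_def)
  then obtain a b where "e = {a, b}" "a \<noteq> b" by (meson card_2_iff)
  with assms(2) that show ?thesis by (metis insert_commute insertE singletonD)
qed

lemma E_edge_at_undamaged:
  assumes v: "v \<in> VH - {u1, u2}" and e: "e \<in> E" "v \<in> e"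
  shows "e \<in> EH"
proof -
  have "E \<subseteq> Pow V" "finite V" using sgraph_G by (auto simp: sgraph_def)
  then have "finite E" by (simp add: finite_subset)
  moreover have "{e \<in> EH. v \<in> e} \<subseteq> {e \<in> E. v \<in> e}"
    using v EH_subset_E by auto
  moreover have "card {e \<in> EH. v \<in> e} = card {e \<in> E. v \<in> e}"
    using degree_undamaged[OF v] by (simp add: degree_def)
  ultimately have "{e \<in> EH. v \<in> e} = {e \<in> E. v \<in> e}"
    by (simp add: card_subset_eq)
  with e show ?thesis by blast
qed

lemma degree_le_card:
  assumes "v \<in> W" "finite W" "\<And>e. e \<in> EH \<Longrightarrow> v \<in> e \<Longrightarrow> e \<subseteq> W"
  shows "degree EH v \<le> card W - 1"
proof -
  have "{e \<in> EH. v \<in> e} \<subseteq> (\<lambda>w. {v, w}) ` (W - {v})"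
  proof
    fix e assume e: "e \<in> {e \<in> EH. v \<in> e}"
    then obtain w where "e = {v, w}" "w \<noteq> v" by (metis (lifting) CollectD EH_edge_at)
    with e assms(3) show "e \<in> (\<lambda>w. {v, w}) ` (W - {v})" by blast
  qed
  then have "degree EH v \<le> card ((\<lambda>w. {v, w}) ` (W - {v}))"
    unfolding degree_def using assms(2) by (simp add: card_mono)
  also have "\<dots> \<le> card (W - {v})"
    using card_image_le assms(2) by blast
  finally show ?thesis using assms(1,2) by simp
qed

definition has_smaller :: bool where
  "has_smaller \<longleftrightarrow> (\<exists>VH' EH' w1 w2. smaller_two_contraction V E VH' EH' w1 w2 VH EH u1 u2)"

definition boundary_in :: "'a set \<Rightarrow> 'a set \<Rightarrow> bool" where
  "boundary_in C T \<longleftrightarrow> (\<forall>v \<in> C. \<forall>w. {v, w} \<in> EH \<longrightarrow> w \<in> C \<union> T)"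

lemma boundary_inD:
  assumes "boundary_in C T" "v \<in> C" "e \<in> EH" "v \<in> e"
  shows "e \<subseteq> C \<union> T"
proof -
  obtain w where "e = {v, w}" using assms(3,4) by (rule EH_edge_at)
  with assms show ?thesis by (auto simp: boundary_in_def)
qed

lemma boundary_in_reachable:
  assumes "p \<in> VH - S"
  shows "boundary_in {w. (p, w) \<in> (adj_in (VH - S) EH)\<^sup>*} S"
  unfolding boundary_in_def
proof (intro ballI allI impI)
  fix v w
  assume v: "v \<in> {w. (p, w) \<in> (adj_in (VH - S) EH)\<^sup>*}" and vw: "{v, w} \<in> EH"
  have "v \<in> VH - S" using v adj_in_reachable_subset[OF assms] by blast
  moreover have "w \<in> VH" using EH_edge_subset[OF vw] by simp
  ultimately have "w \<notin> S \<Longrightarrow> (v, w) \<in> adj_in (VH - S) EH"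
    using vw by (simp add: adj_in_def)
  with v show "w \<in> {w. (p, w) \<in> (adj_in (VH - S) EH)\<^sup>*} \<union> S"
    using rtrancl_into_rtrancl[of p v _ w] by blast
qed

lemma has_smaller_if_attached_at_pair:
  assumes X: "X \<subset> VH" "x \<in> X" "y \<in> X" "x \<noteq> y" "3 \<le> card X"
    and undamaged: "(X - {x, y}) \<inter> {u1, u2} = {}"
    and boundary: "boundary_in (X - {x, y}) {x, y}"
    and path: "is_path V E xs x y" "set (butlast (tl xs)) \<subseteq> V - X"
  shows has_smaller
proof -
  define EH' where "EH' = {e \<in> EH. e \<subseteq> X} \<union> {{x, y}}"
  have "finite X" using X(1) finite_VH finite_subset by blast
  moreover have "e \<subseteq> X \<and> card e = 2" if "e \<in> EH'" for e
    using that X sgraph_H by (auto simp: EH'_def sgraph_def)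
  ultimately have "sgraph X EH'" by (simp add: sgraph_def)
  moreover have "EH' - {{x, y}} \<subseteq> E"
  proof
    fix e assume e: "e \<in> EH' - {{x, y}}"
    then have "e \<in> EH" "e \<subseteq> X" by (auto simp: EH'_def)
    moreover have "{u1, u2} \<subseteq> X \<Longrightarrow> {u1, u2} = {x, y}"
      using undamaged u1_neq_u2 X(4) by auto
    ultimately show "e \<in> E" using e EH_subset_E by auto
  qed
  moreover have "degree EH' v = degree E v" if v: "v \<in> X - {x, y}" for v
  proof -
    have "{e \<in> EH'. v \<in> e} = {e \<in> EH. v \<in> e}"
      using v X(2,3) boundary_inD[OF boundary v] by (auto simp: EH'_def)
    then have "degree EH' v = degree EH v" by (simp add: degree_def)
    also have "\<dots> = degree E v" using v X(1) undamaged degree_undamaged by blast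
    finally show ?thesis .
  qed
  ultimately have "two_contraction V E X EH' x y"
    using X path VH_subset_V by (auto simp: two_contraction_def EH'_def)
  with X(1) undamaged show ?thesis
    unfolding has_smaller_def smaller_two_contraction_def by blast
qed

text \<open>The edge \<open>u\<^sub>1u\<^sub>2\<close> is realised by the path of \<open>G\<close> through \<open>V - VH\<close>.\<close>

lemma rtrancl_adj_in_H_subset_G:
  assumes "C \<subseteq> VH" "C \<inter> {u1, u2} = {}"
  shows "(adj_in (VH - C) EH)\<^sup>* \<subseteq> (adj_in (V - C) E)\<^sup>*"
proof (rule rtrancl_subset_rtrancl, rule subrelI)
  obtain xs where xs: "is_path V E xs u1 u2" "set (butlast (tl xs)) \<subseteq> V - VH"
    using damaged_path by blast
  then have "set xs \<subseteq> {u1, u2} \<union> set (butlast (tl xs))" "set xs \<subseteq> V"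
    using set_butlast_tl[of xs] by (auto simp: is_path_def)
  with xs(2) assms have "set xs \<subseteq> V - C" by blast
  with xs(1) have "is_path (V - C) E xs u1 u2" by (simp add: is_path_def)
  then have damaged_link: "(u1, u2) \<in> (adj_in (V - C) E)\<^sup>*"
    by (rule is_path_imp_rtrancl)
  fix a b assume ab: "(a, b) \<in> adj_in (VH - C) EH"
  show "(a, b) \<in> (adj_in (V - C) E)\<^sup>*"
  proof (cases "{a, b} = {u1, u2}")
    case True
    then have "(a, b) = (u1, u2) \<or> (a, b) = (u2, u1)" by (auto simp: doubleton_eq_iff)
    with damaged_link adj_in_rtrancl_sym[OF damaged_link] show ?thesis by auto
  next
    case False
    with ab have "(a, b) \<in> adj_in (V - C) E"
      using EH_subset_E VH_subset_V by (auto simp: adj_in_def)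
    then show ?thesis by blast
  qed
qed

lemma has_smaller_if_boundary_in_linked_pair:
  assumes C: "C \<subseteq> VH" "C \<inter> {u1, u2} = {}" "C \<noteq> {}"
    and xy: "x \<in> VH - C" "y \<in> VH - C" "x \<noteq> y"
    and boundary: "boundary_in C {x, y}"
    and linked: "(x, y) \<in> (adj_in (VH - C) EH)\<^sup>*"
    and proper: "C \<union> {x, y} \<noteq> VH"
  shows has_smaller
proof -
  define X where "X = C \<union> {x, y}"
  have "(x, y) \<in> (adj_in (V - C) E)\<^sup>*"
    using linked rtrancl_adj_in_H_subset_G[OF C(1,2)] by blast
  moreover have "x \<in> V - C" using xy VH_subset_V by blast
  ultimately obtain xs where xs: "is_path V E xs x y" "set (butlast (tl xs)) \<subseteq> V - X"
    using rtrancl_imp_path_inside[of x y "V - C" E V] unfolding X_def by blast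
  obtain c where "c \<in> C" using C(3) by blast
  with xy have "card {c, x, y} = 3" by (metis DiffE card_3_iff)
  moreover have "{c, x, y} \<subseteq> X" "finite X"
    using \<open>c \<in> C\<close> C(1) xy finite_VH finite_subset unfolding X_def by auto
  ultimately have "3 \<le> card X" by (metis card_mono)
  moreover have "X \<subset> VH" using C(1) xy proper unfolding X_def by blast
  moreover have "X - {x, y} = C" using xy unfolding X_def by blast
  ultimately show ?thesis
    using has_smaller_if_attached_at_pair[OF \<open>X \<subset> VH\<close> _ _ xy(3) \<open>3 \<le> card X\<close> _ _ xs]
      C(2) boundary unfolding X_def by simp
qed

end

locale min_degree_3_setting = two_contraction_setting +
  assumes connected_G: "connected_graph V E"
    and min_degree: "\<And>v. v \<in> VH - {u1, u2} \<Longrightarrow> 3 \<le> degree EH v"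
begin

lemma boundary_in_single_adjacent:
  assumes C: "C \<subseteq> VH" "C \<inter> {u1, u2} = {}" "C \<noteq> {}" and boundary: "boundary_in C {x}"
  shows "\<exists>c \<in> C. {x, c} \<in> EH"
proof (rule ccontr)
  assume no_edge: "\<not> (\<exists>c \<in> C. {x, c} \<in> EH)"
  obtain c where "c \<in> C" using C(3) by blast
  then have "c \<in> V" "u1 \<in> V" using C(1) damaged_in_VH VH_subset_V by auto
  then obtain xs where "is_path V E xs c u1"
    using connected_G by (auto simp: connected_graph_def)
  then have "(c, u1) \<in> (adj_in V E)\<^sup>*" by (rule is_path_imp_rtrancl)
  then have "u1 \<in> C"
  proof (induction rule: rtrancl_induct)
    case base
    show ?case by (rule \<open>c \<in> C\<close>)
  next
    case (step v w)
    then have "{v, w} \<in> EH"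
      using C E_edge_at_undamaged[of v "{v, w}"] by (auto simp: adj_in_def)
    with step.IH boundary no_edge show ?case
      by (auto simp: boundary_in_def insert_commute)
  qed
  with C(2) show False by blast
qed

lemma has_smaller_if_boundary_in_single:
  assumes C: "C \<subseteq> VH" "C \<inter> {u1, u2} = {}" "C \<noteq> {}"
    and x: "x \<in> VH - C" and boundary: "boundary_in C {x}"
  shows has_smaller
proof -
  obtain c where c: "c \<in> C" "{x, c} \<in> EH"
    using boundary_in_single_adjacent[OF C boundary] by blast
  define X where "X = C \<union> {x}"
  have "finite X" using C(1) x finite_VH finite_subset unfolding X_def by auto
  have "3 \<le> degree EH c" using c C min_degree by blast
  also have "degree EH c \<le> card X - 1"
    using degree_le_card[OF _ \<open>finite X\<close>] boundary_inD[OF boundary c(1)] c(1)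
    unfolding X_def by blast
  finally have "3 \<le> card X" by linarith
  have "x \<noteq> c" using x c by blast
  have "{x, c} \<in> E" using c C EH_subset_E by blast
  then have "is_path V E [x, c] x c"
    using \<open>x \<noteq> c\<close> x c(1) C(1) VH_subset_V by (auto simp: is_path_def less_Suc_eq)
  moreover have "X \<subset> VH" using C x u1_neq_u2 damaged_in_VH unfolding X_def by blast
  moreover have "X - {x, c} = C - {c}" using x unfolding X_def by blast
  moreover have "boundary_in (C - {c}) {x, c}"
    using boundary by (auto simp: boundary_in_def)
  ultimately show ?thesis
    using has_smaller_if_attached_at_pair[OF _ _ _ \<open>x \<noteq> c\<close> \<open>3 \<le> card X\<close>] c(1) C(2)
    unfolding X_def by simp
qed

lemma has_smaller_if_unlinked_side:
  assumes C: "C \<subseteq> VH" "C \<inter> {u1, u2} = {}"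
    and xy: "x \<in> VH - C" "y \<in> VH - C" and boundary: "boundary_in C {x, y}"
    and unlinked: "(x, y) \<notin> (adj_in (VH - C) EH)\<^sup>*" "(x, u1) \<notin> (adj_in (VH - C) EH)\<^sup>*"
  shows has_smaller
proof -
  let ?R = "adj_in (VH - C) EH"
  define K where "K = {w. (x, w) \<in> ?R\<^sup>*}"
  have "x \<in> K" "y \<notin> K" using unlinked(1) by (simp_all add: K_def)
  have "K \<subseteq> VH - C" unfolding K_def by (rule adj_in_reachable_subset[OF xy(1)])
  have "(u2, u1) \<in> ?R"
    using damaged_edge damaged_in_VH C(2) by (auto simp: adj_in_def insert_commute)
  then have "(x, u2) \<notin> ?R\<^sup>*" using unlinked(2) rtrancl_into_rtrancl by metis
  then have "(C \<union> K) \<inter> {u1, u2} = {}" using C(2) unlinked(2) by (auto simp: K_def)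
  have "boundary_in K C" unfolding K_def by (rule boundary_in_reachable[OF xy(1)])
  with boundary \<open>x \<in> K\<close> have "boundary_in (C \<union> K) {y}"
    unfolding boundary_in_def by blast
  moreover have "C \<union> K \<subseteq> VH" "C \<union> K \<noteq> {}" "y \<in> VH - (C \<union> K)"
    using C(1) xy(2) \<open>K \<subseteq> VH - C\<close> \<open>x \<in> K\<close> \<open>y \<notin> K\<close> by auto
  ultimately show ?thesis
    using has_smaller_if_boundary_in_single \<open>(C \<union> K) \<inter> {u1, u2} = {}\<close> by blast
qed

lemma has_smaller_if_boundary_in_pair:
  assumes C: "C \<subseteq> VH" "C \<inter> {u1, u2} = {}" "C \<noteq> {}"
    and xy: "x \<in> VH - C" "y \<in> VH - C" "x \<noteq> y"
    and boundary: "boundary_in C {x, y}" and proper: "C \<union> {x, y} \<noteq> VH"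
  shows has_smaller
proof -
  let ?R = "adj_in (VH - C) EH"
  consider "(x, y) \<in> ?R\<^sup>*" | "(x, y) \<notin> ?R\<^sup>*" "(x, u1) \<notin> ?R\<^sup>*" | "(y, x) \<notin> ?R\<^sup>*" "(y, u1) \<notin> ?R\<^sup>*"
    by (meson adj_in_rtrancl_sym rtrancl_trans)
  then show ?thesis
  proof cases
    case 1
    then show ?thesis by (rule has_smaller_if_boundary_in_linked_pair[OF C xy boundary _ proper])
  next
    case 2
    then show ?thesis by (rule has_smaller_if_unlinked_side[OF C(1,2) xy(1,2) boundary])
  next
    case 3
    have "boundary_in C {y, x}" using boundary by (simp add: insert_commute)
    with 3 show ?thesis using has_smaller_if_unlinked_side[OF C(1,2) xy(2,1)] by blast
  qed
qed

lemma has_smaller_if_small_boundary: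
  assumes S: "S \<subseteq> VH" "card S \<le> 2"
    and C: "C \<subseteq> VH - S" "C \<inter> {u1, u2} = {}" "C \<noteq> {}"
    and boundary: "boundary_in C S" and proper: "C \<union> S \<noteq> VH"
  shows has_smaller
proof -
  have "finite S" using S(1) finite_VH finite_subset by blast
  from this S(2) show ?thesis
  proof (cases rule: card_le_2_cases)
    case 1
    then have "boundary_in C {u1}" using boundary by (simp add: boundary_in_def)
    then show ?thesis
      using has_smaller_if_boundary_in_single C damaged_in_VH by blast
  next
    case (2 x)
    with S C boundary show ?thesis using has_smaller_if_boundary_in_single by blast
  next
    case (3 x y)
    with S C boundary proper show ?thesis using has_smaller_if_boundary_in_pair by blast
  qed
qed

text \<open>Since \<open>u\<^sub>1u\<^sub>2\<close> is an edge, at most one component of \<open>H - S\<close> meets \<open>{u\<^sub>1, u\<^sub>2}\<close>.\<close>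

lemma has_smaller_if_separated:
  assumes S: "S \<subseteq> VH" "card S \<le> 2"
    and ab: "a \<in> VH - S" "b \<in> VH - S" and unlinked: "(a, b) \<notin> (adj_in (VH - S) EH)\<^sup>*"
  shows has_smaller
proof -
  let ?R = "adj_in (VH - S) EH"
  let ?comp = "\<lambda>p. {w. (p, w) \<in> ?R\<^sup>*}"
  have comp_subset: "?comp p \<subseteq> VH - S" if "p \<in> VH - S" for p
    using that by (rule adj_in_reachable_subset)
  have separated: has_smaller
    if "p \<in> VH - S" "q \<in> VH - S" "(p, q) \<notin> ?R\<^sup>*" "?comp p \<inter> {u1, u2} = {}" for p q
  proof (rule has_smaller_if_small_boundary[OF S comp_subset])
    show "boundary_in (?comp p) S" by (rule boundary_in_reachable[OF that(1)])
    show "?comp p \<union> S \<noteq> VH" using that(2,3) by blast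
  qed (use that in auto)
  have "?comp a \<inter> {u1, u2} = {} \<or> ?comp b \<inter> {u1, u2} = {}"
  proof (rule ccontr)
    assume "\<not> ?thesis"
    then obtain u u' where u: "u \<in> ?comp a" "u \<in> {u1, u2}" and u': "u' \<in> ?comp b" "u' \<in> {u1, u2}"
      by blast
    have "u \<in> VH - S" "u' \<in> VH - S" using u u' comp_subset ab by blast+
    then have "(u, u') \<in> ?R\<^sup>*"
      using u(2) u'(2) damaged_edge by (auto simp: adj_in_def insert_commute)
    moreover have "(a, u) \<in> ?R\<^sup>*" "(u', b) \<in> ?R\<^sup>*"
      using u(1) u'(1) adj_in_rtrancl_sym by auto
    ultimately have "(a, b) \<in> ?R\<^sup>*" by (meson rtrancl_trans)
    with unlinked show False by blast
  qed
  then show ?thesis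
  proof
    assume "?comp a \<inter> {u1, u2} = {}"
    with ab unlinked show ?thesis by (rule separated)
  next
    assume "?comp b \<inter> {u1, u2} = {}"
    moreover have "(b, a) \<notin> ?R\<^sup>*" using unlinked adj_in_rtrancl_sym[of b a] by blast
    ultimately show ?thesis using ab by (intro separated[of b a])
  qed
qed

lemma k_connected_3_if_no_smaller:
  assumes "\<not> has_smaller"
  shows "k_connected 3 VH EH"
proof -
  have "3 < card VH"
  proof (rule ccontr)
    assume "\<not> 3 < card VH"
    then have "card VH = 3" using card_VH_ge_3 by linarith
    moreover have "card {u1, u2} = 2" using u1_neq_u2 by simp
    ultimately have "\<not> VH \<subseteq> {u1, u2}" using card_mono[of "{u1, u2}" VH] by auto
    then obtain w where w: "w \<in> VH - {u1, u2}" by blast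
    have "degree EH w \<le> card VH - 1"
      using degree_le_card[OF _ finite_VH] w EH_edge_subset by blast
    with min_degree[OF w] \<open>card VH = 3\<close> show False by simp
  qed
  moreover have "connected_graph (VH - S) {e \<in> EH. e \<inter> S = {}}" if S: "S \<subseteq> VH" "card S < 3" for S
  proof -
    have "VH - S \<noteq> {}"
      using S \<open>3 < card VH\<close> finite_VH card_mono[of S VH] by auto
    moreover have "adj_in (VH - S) {e \<in> EH. e \<inter> S = {}} = adj_in (VH - S) EH"
      by (auto simp: adj_in_def)
    moreover have "(a, b) \<in> (adj_in (VH - S) EH)\<^sup>*" if "a \<in> VH - S" "b \<in> VH - S" for a b
      using has_smaller_if_separated[of S a b] S that assms by linarith
    ultimately show ?thesis
      unfolding connected_graph_def by (metis rtrancl_imp_is_path)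
  qed
  ultimately show ?thesis by (simp add: k_connected_def)
qed

end

theorem claim8:
  fixes V :: "'a set" and E :: "'a set set" and VH :: "'a set" and EH :: "'a set set"
    and u1 u2 :: 'a
  assumes "sgraph V E"
    and "connected_graph V E"
    and "planar V E"
    and "minimal_two_contraction V E VH EH u1 u2"
  shows "(\<exists>v \<in> VH - {u1, u2}. degree EH v \<le> 4) \<or> k_connected 3 VH EH"
proof -
  have "k_connected 3 VH EH" if "\<forall>v \<in> VH - {u1, u2}. 4 < degree EH v"
  proof -
    from that have "\<And>v. v \<in> VH - {u1, u2} \<Longrightarrow> 3 \<le> degree EH v" by force
    with assms have "min_degree_3_setting V E VH EH u1 u2"
      by unfold_locales (auto simp: minimal_two_contraction_def)
    then interpret min_degree_3_setting V E VH EH u1 u2 .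
    show ?thesis
      using assms(4) k_connected_3_if_no_smaller
      by (auto simp: minimal_two_contraction_def has_smaller_def)
  qed
  then show ?thesis by force
qed

end
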